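(* Let $V$ be a set and let $(\mathcal{H}_\ell)_{\ell\in\mathbb{Z}}$ be a hypergraph chain over $V$ with Helly Number $h$ and Colorful Helly Number $k\ge h$. Then there exists a function $\beta:(0,1)\to[0,1)$ with $\lim_{\alpha\to1}\beta(\alpha)=1$ such that for every $\ell\in\mathbb{Z}$, every finite set $S\subset V$ and every $\alpha\in(0,1)$, if $\left|\mathcal{H}_\ell\cap\binom{S}{h}\right|\ge\alpha\binom{|S|}{h}$, then there exists $S'\subset S$ with $|S'|\ge\beta(\alpha)|S|$ and $S'\in\mathcal{H}_{\ell+3}$.
   Context: A hypergraph on a base set $V$ is a family $\mathcal{H}\subset 2^V$; it is downwards closed if $H\in\mathcal{H}$ and $G\subset H$ imply $G\in\mathcal{H}$. A hypergraph chain over $V$ is a sequence $(\mathcal{H}_\ell)_{\ell\in\mathbb{Z}}$ of downwards closed hypergraphs on $V$ with $\mathcal{H}_\ell\subset\mathcal{H}_{\ell+1}$ for all $\ell$. It has Helly Number $h$ if for every $\ell\in\mathbb{Z}$ and every $S\subseteq V$, $\binom{S}{h}\subset\mathcal{H}_\ell$ implies $S\in\mathcal{H}_{\ell+1}$ (where $\binom{S}{h}$ is the set of $h$-element subsets of $S$). For $S_1,\dots,S_k\subset V$, a set $F\subset V$ is a colorful selection if there is a surjective map $\phi:\{1,\dots,k\}\to F$ with $\phi(i)\in S_i$ for all $i$; the set of these is $S_1\otimes\dots\otimes S_k$. The chain has Colorful Helly Number $k$ if whenever $S_1,\dots,S_k$ are finite subsets of $V$ and $\ell\in\mathbb{Z}$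 with $S_1\otimes\dots\otimes S_k\subset\mathcal{H}_\ell$, some $S_j\in\mathcal{H}_{\ell+1}$. *)

theory Defs
  imports Complex_Main
begin

definition hypergraph_on :: "'a set \<Rightarrow> 'a set set \<Rightarrow> bool" where
  "hypergraph_on V H \<longleftrightarrow> H \<subseteq> Pow V"

definition downwards_closed :: "'a set set \<Rightarrow> bool" where
  "downwards_closed H \<longleftrightarrow> (\<forall>A B. A \<in> H \<longrightarrow> B \<subseteq> A \<longrightarrow> B \<in> H)"

definition subsets_of_size :: "'a set \<Rightarrow> nat \<Rightarrow> 'a set set" where
  "subsets_of_size S h = {T. T \<subseteq> S \<and> card T = h \<and> finite T}"

definition hypergraph_chain :: "'a set \<Rightarrow> (int \<Rightarrow> 'a set set) \<Rightarrow> bool" where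
  "hypergraph_chain V H \<longleftrightarrow>
     (\<forall>l. hypergraph_on V (H l) \<and> downwards_closed (H l) \<and> H l \<subseteq> H (l + 1))"

definition helly_number :: "'a set \<Rightarrow> (int \<Rightarrow> 'a set set) \<Rightarrow> nat \<Rightarrow> bool" where
  "helly_number V H h \<longleftrightarrow>
     (\<forall>l S. S \<subseteq> V \<longrightarrow> subsets_of_size S h \<subseteq> H l \<longrightarrow> S \<in> H (l + 1))"

definition colorful_selections :: "nat \<Rightarrow> (nat \<Rightarrow> 'a set) \<Rightarrow> 'a set set" where
  "colorful_selections k S =
     {F. \<exists>phi. phi ` {1..k} = F \<and> (\<forall>i\<in>{1..k}. phi i \<in> S i)}"

definition colorful_helly_number :: "'a set \<Rightarrow> (int \<Rightarrow> 'a set set) \<Rightarrow> nat \<Rightarrow> bool" where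
  "colorful_helly_number V H k \<longleftrightarrow>
     (\<forall>l S. (\<forall>i\<in>{1..k}. finite (S i) \<and> S i \<subseteq> V) \<longrightarrow>
            colorful_selections k S \<subseteq> H l \<longrightarrow> (\<exists>j\<in>{1..k}. S j \<in> H (l + 1)))"

end

(* Let b be the number of h-subsets of S outside H l; the density hypothesis gives
   b <= (1 - alpha) n^h with n = |S|.  Take a maximal family D of pairwise disjoint
   h-subsets of S outside H (l + 2).  Every h-subset of S' = S - Union D lies in H (l + 2),
   so S' is in H (l + 3) by the Helly property, and only h |D| points were removed.
   To bound m = |D|: any k members of D are not in H (l + 2), so by colorful Helly some
   colorful selection of them is outside H (l + 1), and by Helly one of its h-subsets is
   outside H l; this h-set meets h distinct members of D.  Double counting gives
   (m choose k) <= b (m - h choose k - h), i.e. (m choose h) <= (k choose h) b, hence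
   m = O(b^(1/h)) = O((1 - alpha)^(1/h) n). *)

theory Submission
  imports Defs "HOL-Library.Disjoint_Sets"
begin

definition partial_transversal :: "'a set set \<Rightarrow> 'a set \<Rightarrow> bool" where
  "partial_transversal D G \<longleftrightarrow>
     G \<subseteq> \<Union>D \<and> (\<forall>T\<in>D. \<forall>x\<in>G. \<forall>y\<in>G. x \<in> T \<longrightarrow> y \<in> T \<longrightarrow> x = y)"

lemma hypergraph_chain_mono:
  assumes "hypergraph_chain V H" and "l \<le> l'"
  shows "H l \<subseteq> H l'"
  using assms(2)
proof (induction l' rule: int_ge_induct)
  case (step i)
  then show ?case
    using assms(1) unfolding hypergraph_chain_def by blast
qed simp

lemma subsets_of_size_eq:
  assumes "finite S"
  shows "subsets_of_size S h = {T. T \<subseteq> S \<and> card T = h}"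
  using assms finite_subset unfolding subsets_of_size_def by blast

lemma finite_subsets_of_size: "finite S \<Longrightarrow> finite (subsets_of_size S h)"
  by (simp add: subsets_of_size_eq)

lemma card_subsets_of_size: "finite S \<Longrightarrow> card (subsets_of_size S h) = card S choose h"
  by (simp add: subsets_of_size_eq n_subsets)

lemma helly_numberD:
  assumes "helly_number V H h" and "S \<subseteq> V" and "subsets_of_size S h \<subseteq> H l"
  shows "S \<in> H (l + 1)"
  using assms unfolding helly_number_def by blast

lemma disjoint_members_eq:
  assumes "disjoint D" and "T \<in> D" and "U \<in> D" and "x \<in> T" and "x \<in> U"
  shows "T = U"
  using assms disjointD by blast

lemma disjoint_subfamily_meeting_all:
  assumes "finite F" and "{} \<notin> F"
  shows "\<exists>D\<subseteq>F. disjoint D \<and> (\<forall>T\<in>F. T \<inter> \<Union>D \<noteq> {})"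
  using assms
proof (induction F rule: finite_induct)
  case (insert T F)
  then obtain D where D: "D \<subseteq> F" "disjoint D" "\<forall>U\<in>F. U \<inter> \<Union>D \<noteq> {}"
    by blast
  show ?case
  proof (cases "T \<inter> \<Union>D = {}")
    case True
    have "disjoint (insert T D)"
      using D(2) True by (auto simp: pairwise_insert disjnt_def)
    moreover have "U \<inter> \<Union>(insert T D) \<noteq> {}" if "U \<in> insert T F" for U
    proof (cases "U = T")
      case True
      then show ?thesis using insert.prems by auto
    next
      case False
      then have "U \<inter> \<Union>D \<noteq> {}" using that D(3) by simp
      then show ?thesis by auto
    qed
    ultimately show ?thesis
      using D(1) by (metis insert_mono)
  next
    case False
    then have "U \<inter> \<Union>D \<noteq> {}" if "U \<in> insert T F" for U
      using that D(3) by (cases "U = T") auto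
    then show ?thesis
      using D(1,2) by (metis subset_insertI2)
  qed
qed simp

lemma card_le_card_image_mult:
  assumes "finite A" and "\<And>y. y \<in> f ` A \<Longrightarrow> card {x\<in>A. f x = y} \<le> q"
  shows "card A \<le> card (f ` A) * q"
proof -
  have "A = (\<Union>y\<in>f ` A. {x\<in>A. f x = y})" by blast
  then have "card A = card (\<Union>y\<in>f ` A. {x\<in>A. f x = y})" by simp
  also have "\<dots> \<le> (\<Sum>y\<in>f ` A. card {x\<in>A. f x = y})"
    using assms(1) by (intro card_UN_le) simp
  also have "\<dots> \<le> (\<Sum>y\<in>f ` A. q)"
    by (rule sum_mono) (rule assms(2))
  finally show ?thesis by simp
qed

lemma card_supersets_le:
  assumes "finite D" and "J \<subseteq> D"
  shows "card {X. J \<subseteq> X \<and> X \<subseteq> D \<and> card X = k} \<le> (card D - card J) choose (k - card J)"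
proof -
  have "finite J" using assms finite_subset by blast
  let ?A = "{X. J \<subseteq> X \<and> X \<subseteq> D \<and> card X = k}"
  let ?B = "{Y. Y \<subseteq> D - J \<and> card Y = k - card J}"
  have "inj_on (\<lambda>X. X - J) ?A"
    by (rule inj_onI) (metis (no_types, lifting) Diff_partition mem_Collect_eq)
  moreover have "(\<lambda>X. X - J) ` ?A \<subseteq> ?B"
  proof (intro image_subsetI CollectI conjI)
    fix X assume "X \<in> ?A"
    then have "J \<subseteq> X" "X \<subseteq> D" "card X = k" by auto
    then show "X - J \<subseteq> D - J" and "card (X - J) = k - card J"
      using \<open>finite J\<close> by (auto simp: card_Diff_subset)
  qed
  moreover have "finite ?B" using assms(1) by auto
  ultimately have "card ?A \<le> card ?B"
    by (rule card_inj_on_le)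
  also have "\<dots> = (card (D - J) choose (k - card J))"
    using assms(1) by (simp add: n_subsets)
  finally show ?thesis
    using \<open>finite J\<close> assms(2) by (simp add: card_Diff_subset)
qed

lemma partial_transversal_mono:
  assumes "partial_transversal X G" and "X \<subseteq> D" and "disjoint D"
  shows "partial_transversal D G"
  unfolding partial_transversal_def
proof (intro conjI ballI impI)
  show "G \<subseteq> \<Union>D" using assms(1,2) unfolding partial_transversal_def by blast
next
  fix T x y assume "T \<in> D" "x \<in> G" "y \<in> G" "x \<in> T" "y \<in> T"
  moreover obtain U where "U \<in> X" "x \<in> U"
    using assms(1) \<open>x \<in> G\<close> unfolding partial_transversal_def by blast
  ultimately have "U = T" and "y \<in> U"
    using disjoint_members_eq[OF assms(3)] assms(2) by blast+
  then show "x = y"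
    using assms(1) \<open>U \<in> X\<close> \<open>x \<in> G\<close> \<open>y \<in> G\<close> \<open>x \<in> U\<close>
    unfolding partial_transversal_def by blast
qed

lemma card_members_meeting_transversal:
  assumes "partial_transversal D G" and "disjoint D" and "finite D"
  shows "card {T\<in>D. G \<inter> T \<noteq> {}} = card G"
proof -
  let ?J = "{T\<in>D. G \<inter> T \<noteq> {}}"
  have single: "card (G \<inter> T) = 1" if T: "T \<in> ?J" for T
  proof -
    obtain x where "x \<in> G \<inter> T" using T by blast
    moreover have "y = x" if "y \<in> G \<inter> T" for y
      using assms(1) T \<open>x \<in> G \<inter> T\<close> that unfolding partial_transversal_def by blast
    ultimately have "G \<inter> T = {x}" by blast
    then show ?thesis by simp
  qed
  have "G = (\<Union>T\<in>?J. G \<inter> T)"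
    using assms(1) unfolding partial_transversal_def by blast
  also have "card \<dots> = (\<Sum>T\<in>?J. card (G \<inter> T))"
  proof (rule card_UN_disjoint)
    show "finite ?J" using assms(3) by simp
    show "\<forall>T\<in>?J. finite (G \<inter> T)"
      using single by (metis card.infinite zero_neq_one)
    show "\<forall>T\<in>?J. \<forall>U\<in>?J. T \<noteq> U \<longrightarrow> G \<inter> T \<inter> (G \<inter> U) = {}"
      using assms(2) by (auto simp: disjoint_def)
  qed
  also have "\<dots> = card ?J"
    using single by simp
  finally show ?thesis by simp
qed

lemma card_subfamilies_le_transversals:
  assumes "disjoint D" and "finite D" and "finite B"
    and transversal: "\<And>X. X \<subseteq> D \<Longrightarrow> card X = k \<Longrightarrow>
      \<exists>G\<in>B. partial_transversal X G \<and> card G = h"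
  shows "(card D choose k) \<le> card B * (card D - h choose (k - h))"
proof -
  define Ks where "Ks = {X. X \<subseteq> D \<and> card X = k}"
  have "\<forall>X\<in>Ks. \<exists>G. G \<in> B \<and> partial_transversal X G \<and> card G = h"
    using transversal unfolding Ks_def by blast
  from bchoice[OF this] obtain g
    where g: "\<And>X. X \<in> Ks \<Longrightarrow> g X \<in> B \<and> partial_transversal X (g X) \<and> card (g X) = h"
    by blast
  \<comment> \<open>The members of D met by G depend on G alone and all lie in X.\<close>
  have fibre: "card {X\<in>Ks. g X = G} \<le> (card D - h choose (k - h))" if G: "G \<in> g ` Ks" for G
  proof -
    define J where "J = {T\<in>D. G \<inter> T \<noteq> {}}"
    obtain X0 where "X0 \<in> Ks" "G = g X0" using G by blast
    then have "partial_transversal D G" "card G = h"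
      using g partial_transversal_mono[OF _ _ assms(1)] unfolding Ks_def by auto
    then have "card J = h"
      unfolding J_def using card_members_meeting_transversal[OF _ assms(1,2)] by simp
    have "J \<subseteq> X" if "X \<in> Ks" "g X = G" for X
    proof
      fix T assume "T \<in> J"
      then obtain x where "T \<in> D" "x \<in> G" "x \<in> T" unfolding J_def by blast
      moreover obtain U where "U \<in> X" "x \<in> U"
        using g[OF \<open>X \<in> Ks\<close>] \<open>g X = G\<close> \<open>x \<in> G\<close> unfolding partial_transversal_def by blast
      moreover have "X \<subseteq> D" using \<open>X \<in> Ks\<close> unfolding Ks_def by blast
      ultimately show "T \<in> X" using disjoint_members_eq[OF assms(1)] by blast
    qed
    then have "{X\<in>Ks. g X = G} \<subseteq> {X. J \<subseteq> X \<and> X \<subseteq> D \<and> card X = k}"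
      unfolding Ks_def by blast
    then have "card {X\<in>Ks. g X = G} \<le> card {X. J \<subseteq> X \<and> X \<subseteq> D \<and> card X = k}"
      using assms(2) by (intro card_mono) auto
    also have "\<dots> \<le> (card D - h choose (k - h))"
      using card_supersets_le[OF assms(2), of J k] \<open>card J = h\<close> unfolding J_def by auto
    finally show ?thesis .
  qed
  have "card Ks = card D choose k"
    unfolding Ks_def using assms(2) by (simp add: n_subsets)
  moreover have "card Ks \<le> card (g ` Ks) * (card D - h choose (k - h))"
    using assms(2) fibre unfolding Ks_def by (intro card_le_card_image_mult) auto
  moreover have "card (g ` Ks) \<le> card B"
    using g assms(3) by (intro card_mono) auto
  ultimately show ?thesis
    using mult_le_mono1 order_trans by metis
qed

lemma colorful_helly_transversal:
  assumes helly: "helly_number V H h" and colorful: "colorful_helly_number V H k"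
    and "disjoint X" and "finite X" and "card X = k"
    and members: "\<And>T. T \<in> X \<Longrightarrow> finite T \<and> T \<subseteq> V \<and> T \<notin> H (l + 2)"
  shows "\<exists>G. partial_transversal X G \<and> card G = h \<and> G \<notin> H l"
proof -
  obtain e where e: "bij_betw e {1..k} X"
    using finite_same_card_bij[of "{1..k}" X] assms(4,5) by auto
  then have eX: "e i \<in> X" if "i \<in> {1..k}" for i
    using that bij_betwE by blast
  have "\<not> colorful_selections k e \<subseteq> H (l + 1)"
  proof
    assume "colorful_selections k e \<subseteq> H (l + 1)"
    then obtain j where "j \<in> {1..k}" "e j \<in> H (l + 1 + 1)"
      using colorful eX members unfolding colorful_helly_number_def by blast
    then show False
      using eX members by (simp add: add.assoc)
  qed
  then obtain F phi where F: "F \<notin> H (l + 1)" "phi ` {1..k} = F" "\<forall>i\<in>{1..k}. phi i \<in> e i"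
    unfolding colorful_selections_def by blast
  have "F \<subseteq> V"
    using F(2,3) eX members by blast
  then have "\<not> subsets_of_size F h \<subseteq> H l"
    using helly_numberD[OF helly] F(1) by blast
  then obtain G where G: "G \<subseteq> F" "card G = h" "G \<notin> H l"
    unfolding subsets_of_size_def by blast
  have "partial_transversal X G"
    unfolding partial_transversal_def
  proof (intro conjI ballI impI)
    show "G \<subseteq> \<Union>X" using G(1) F(2,3) eX by blast
  next
    fix T x y assume "T \<in> X" "x \<in> G" "y \<in> G" "x \<in> T" "y \<in> T"
    then obtain i j where ij: "i \<in> {1..k}" "j \<in> {1..k}" "x = phi i" "y = phi j"
      using G(1) F(2) by blast
    then have "e i = T" "e j = T"
      using disjoint_members_eq[OF assms(3)] eX F(3) \<open>T \<in> X\<close> \<open>x \<in> T\<close> \<open>y \<in> T\<close> by blast+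
    then have "i = j"
      using e ij(1,2) unfolding bij_betw_def inj_on_def by metis
    then show "x = y" using ij by simp
  qed
  with G show ?thesis by blast
qed

lemma le_mult_root_of_choose_le:
  fixes b :: real
  assumes "0 < h" and "h \<le> m" and "1 \<le> K" and choose_le: "real (m choose h) \<le> real K * b"
  shows "real m \<le> real (h * K) * root h b"
proof -
  have "0 \<le> real K * b"
    using choose_le of_nat_0_le_iff order_trans by blast
  then have "0 \<le> b"
    using assms(3) by (simp add: zero_le_mult_iff)
  have "real K \<le> real K ^ h"
    using assms(1,3) by (intro self_le_power) auto
  have "(real m / real h) ^ h \<le> real (m choose h)"
    using binomial_ge_n_over_k_pow_k[OF assms(2)] by simp
  also have "\<dots> \<le> real K * b" by (fact choose_le)
  also have "\<dots> \<le> real K ^ h * b"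
    using \<open>real K \<le> real K ^ h\<close> \<open>0 \<le> b\<close> by (rule mult_right_mono)
  also have "\<dots> = (real K * root h b) ^ h"
    using assms(1) \<open>0 \<le> b\<close> by (simp add: power_mult_distrib)
  finally have "(real m / real h) ^ Suc (h - 1) \<le> (real K * root h b) ^ Suc (h - 1)"
    using assms(1) by simp
  then have "real m / real h \<le> real K * root h b"
    by (rule power_le_imp_le_base) (use \<open>0 \<le> b\<close> in \<open>simp add: real_root_ge_zero\<close>)
  then show ?thesis
    using assms(1) by (simp add: pos_divide_le_eq mult_ac)
qed

lemma transversal_outside_chain:
  assumes helly: "helly_number V H h" and colorful: "colorful_helly_number V H k"
    and "finite S" and "S \<subseteq> V" and D: "D \<subseteq> subsets_of_size S h - H (l + 2)" and "disjoint D"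
    and X: "X \<subseteq> D" "card X = k"
  shows "\<exists>G\<in>subsets_of_size S h - H l. partial_transversal X G \<and> card G = h"
proof -
  have "finite (subsets_of_size S h - H (l + 2))"
    using assms(3) by (simp add: finite_subsets_of_size)
  then have "finite D"
    using D by (rule finite_subset[rotated])
  then have "finite X"
    using X(1) by (rule finite_subset[rotated])
  have members: "finite T \<and> T \<subseteq> V \<and> T \<notin> H (l + 2)" if "T \<in> X" for T
  proof -
    have "T \<in> subsets_of_size S h" "T \<notin> H (l + 2)"
      using that X(1) D by auto
    then show ?thesis
      using assms(4) by (auto simp: subsets_of_size_def)
  qed
  obtain G where G: "partial_transversal X G" "card G = h" "G \<notin> H l"
    using colorful_helly_transversal[OF helly colorful pairwise_subset[OF \<open>disjoint D\<close> X(1)]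
        \<open>finite X\<close> X(2) members]
    by blast
  have "\<Union>X \<subseteq> S"
    using X(1) D by (auto simp: subsets_of_size_def)
  with G(1) have "G \<subseteq> S"
    unfolding partial_transversal_def by blast
  moreover have "finite G"
    using \<open>G \<subseteq> S\<close> assms(3) by (rule finite_subset)
  ultimately have "G \<in> subsets_of_size S h - H l"
    using G(2,3) unfolding subsets_of_size_def by simp
  with G(1,2) show ?thesis
    by blast
qed

lemma choose_le_of_subfamily_bound:
  fixes m b :: nat
  assumes "h \<le> k" and "k \<le> m" and "(m choose k) \<le> b * (m - h choose (k - h))"
  shows "m choose h \<le> (k choose h) * b"
proof -
  have "(m choose h) * (m - h choose (k - h)) = (m choose k) * (k choose h)"
    using choose_mult[OF assms(1,2)] by simp
  also have "\<dots> \<le> b * (m - h choose (k - h)) * (k choose h)"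
    using assms(3) by (rule mult_le_mono1)
  also have "\<dots> = ((k choose h) * b) * (m - h choose (k - h))"
    by (simp only: ac_simps)
  finally show ?thesis
    using assms(1,2) by simp
qed

lemma card_disjoint_family_outside_chain_le:
  assumes chain: "hypergraph_chain V H"
    and helly: "helly_number V H h" and colorful: "colorful_helly_number V H k"
    and "0 < h" and "h \<le> k" and "finite S" and "S \<subseteq> V"
    and D: "D \<subseteq> subsets_of_size S h - H (l + 2)" and "disjoint D"
  shows "real (card D) \<le> real (k + h * (k choose h)) * root h (card (subsets_of_size S h - H l))"
proof -
  define B where "B = subsets_of_size S h - H l"
  define K where "K = k choose h"
  have "finite B"
    unfolding B_def using assms(6) by (simp add: finite_subsets_of_size)
  have "D \<subseteq> B"
    using D hypergraph_chain_mono[OF chain, of l "l + 2"] unfolding B_def by auto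
  then have "finite D"
    using \<open>finite B\<close> finite_subset by blast
  consider "D = {}" | "D \<noteq> {}" "card D < k" | "k \<le> card D" by linarith
  then have "real (card D) \<le> real (k + h * K) * root h (card B)"
  proof cases
    case 1
    then show ?thesis by (simp add: real_root_ge_zero)
  next
    case 2
    then have "1 \<le> root h (card B)"
      using \<open>D \<subseteq> B\<close> \<open>finite B\<close> assms(4) by (auto simp: Suc_le_eq card_gt_0_iff)
    then have "real (k + h * K) * 1 \<le> real (k + h * K) * root h (card B)"
      by (rule mult_left_mono) simp
    moreover have "real (card D) \<le> real (k + h * K)"
      using 2 by (simp only: of_nat_le_iff)
    ultimately show ?thesis
      by simp
  next
    case 3
    have "(card D choose k) \<le> card B * (card D - h choose (k - h))"
    proof (rule card_subfamilies_le_transversals[OF \<open>disjoint D\<close> \<open>finite D\<close> \<open>finite B\<close>])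
      fix X assume "X \<subseteq> D" "card X = k"
      from transversal_outside_chain[OF helly colorful assms(6,7) D \<open>disjoint D\<close> this]
      show "\<exists>G\<in>B. partial_transversal X G \<and> card G = h"
        unfolding B_def .
    qed
    then have "card D choose h \<le> K * card B"
      unfolding K_def by (rule choose_le_of_subfamily_bound[OF assms(5) 3])
    then have "real (card D choose h) \<le> real K * real (card B)"
      by (simp only: of_nat_mult[symmetric] of_nat_le_iff)
    moreover have "1 \<le> K"
      unfolding K_def using assms(5) by (simp add: Suc_le_eq)
    ultimately have "real (card D) \<le> real (h * K) * root h (card B)"
      using le_mult_root_of_choose_le[OF assms(4) order_trans[OF assms(5) 3]] by blast
    also have "\<dots> \<le> real (k + h * K) * root h (card B)"
      by (intro mult_right_mono) (simp_all add: real_root_ge_zero)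
    finally show ?thesis .
  qed
  then show ?thesis
    unfolding B_def K_def .
qed

lemma card_le_card_diff_Union:
  assumes "finite S" and "\<And>T. T \<in> D \<Longrightarrow> T \<subseteq> S \<and> card T = h"
  shows "card S \<le> card (S - \<Union>D) + h * card D"
proof -
  have "\<Union>D \<subseteq> S"
    using assms(2) by blast
  then have "card S = card ((S - \<Union>D) \<union> \<Union>D)"
    by (simp add: Un_absorb2)
  also have "\<dots> \<le> card (S - \<Union>D) + card (\<Union>D)"
    by (rule card_Un_le)
  also have "card (\<Union>D) \<le> (\<Sum>T\<in>D. card T)"
    by (rule card_Union_le_sum_card)
  also have "(\<Sum>T\<in>D. card T) = (\<Sum>T\<in>D. h)"
    using assms(2) by (intro sum.cong) simp_all
  finally show ?thesis
    by (simp add: mult.commute)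
qed

lemma helly_member_diff_Union:
  assumes helly: "helly_number V H h" and "S \<subseteq> V"
    and meets: "\<forall>T\<in>subsets_of_size S h - H (l + 2). T \<inter> \<Union>D \<noteq> {}"
  shows "S - \<Union>D \<in> H (l + 3)"
proof -
  have "subsets_of_size (S - \<Union>D) h \<subseteq> H (l + 2)"
  proof
    fix T assume "T \<in> subsets_of_size (S - \<Union>D) h"
    then have "T \<in> subsets_of_size S h" and "T \<inter> \<Union>D = {}"
      unfolding subsets_of_size_def by auto
    with meets show "T \<in> H (l + 2)"
      by blast
  qed
  moreover have "S - \<Union>D \<subseteq> V"
    using assms(2) by blast
  ultimately have "S - \<Union>D \<in> H (l + 2 + 1)"
    by (intro helly_numberD[OF helly])
  then show ?thesis
    by (simp add: add.assoc)
qed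

lemma helly_member_removing_few_points:
  assumes chain: "hypergraph_chain V H"
    and helly: "helly_number V H h" and colorful: "colorful_helly_number V H k"
    and "0 < h" and "h \<le> k" and "finite S" and "S \<subseteq> V"
  shows "\<exists>S'\<subseteq>S. S' \<in> H (l + 3) \<and>
    real (card S) \<le> real (card S') + real (h * (k + h * (k choose h))) * root h (card (subsets_of_size S h - H l))"
proof -
  define F where "F = subsets_of_size S h - H (l + 2)"
  define r where "r = real (k + h * (k choose h)) * root h (card (subsets_of_size S h - H l))"
  have "finite F"
    unfolding F_def using assms(6) by (simp add: finite_subsets_of_size)
  moreover have "{} \<notin> F"
    using assms(4) unfolding F_def subsets_of_size_def by simp
  ultimately obtain D where D: "D \<subseteq> F" "disjoint D" and meets: "\<forall>T\<in>F. T \<inter> \<Union>D \<noteq> {}"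
    using disjoint_subfamily_meeting_all[OF \<open>finite F\<close> \<open>{} \<notin> F\<close>] by blast
  have "S - \<Union>D \<in> H (l + 3)"
    using helly_member_diff_Union[OF helly assms(7)] meets unfolding F_def .
  have "T \<subseteq> S \<and> card T = h" if "T \<in> D" for T
    using that D(1) unfolding F_def subsets_of_size_def by auto
  then have "card S \<le> card (S - \<Union>D) + h * card D"
    by (rule card_le_card_diff_Union[OF assms(6)])
  then have "real (card S) \<le> real (card (S - \<Union>D)) + real h * real (card D)"
    by (simp only: of_nat_add[symmetric] of_nat_mult[symmetric] of_nat_le_iff)
  moreover have "real (card D) \<le> r"
    using card_disjoint_family_outside_chain_le[OF chain helly colorful assms(4-7) _ D(2)] D(1)
    unfolding r_def F_def by blast
  then have "real h * real (card D) \<le> real h * r"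
    by (rule mult_left_mono) simp
  ultimately have "real (card S) \<le> real (card (S - \<Union>D)) + real h * r"
    by linarith
  then have "real (card S) \<le> real (card (S - \<Union>D)) + real (h * (k + h * (k choose h))) * root h (card (subsets_of_size S h - H l))"
    unfolding r_def by (simp only: of_nat_mult[of h] mult.assoc)
  with \<open>S - \<Union>D \<in> H (l + 3)\<close> show ?thesis
    by blast
qed

lemma choose_le_pow: "n choose k \<le> n ^ k"
  by (cases "k \<le> n") (simp_all add: binomial_le_pow binomial_eq_0)

lemma card_subsets_of_size_outside_le:
  assumes "finite S"
    and dense: "\<alpha> * real (card S choose h) \<le> real (card (H l \<inter> subsets_of_size S h))"
  shows "real (card (subsets_of_size S h - H l)) \<le> (1 - \<alpha>) * real (card S choose h)"
proof -
  have "card (H l \<inter> subsets_of_size S h) \<le> card (subsets_of_size S h)"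
    using assms(1) by (intro card_mono) (simp_all add: finite_subsets_of_size)
  moreover have "card (subsets_of_size S h - H l) = card (subsets_of_size S h) - card (H l \<inter> subsets_of_size S h)"
    using assms(1) by (simp add: card_Diff_subset_Int finite_subsets_of_size Int_commute)
  ultimately show ?thesis
    using dense assms(1) by (simp add: card_subsets_of_size of_nat_diff algebra_simps)
qed

lemma helly_member_of_dense:
  assumes chain: "hypergraph_chain V H"
    and helly: "helly_number V H h" and colorful: "colorful_helly_number V H k"
    and "0 < h" and "h \<le> k" and "finite S" and "S \<subseteq> V" and "\<alpha> \<le> 1"
    and dense: "\<alpha> * real (card S choose h) \<le> real (card (H l \<inter> subsets_of_size S h))"
  shows "\<exists>S'\<subseteq>S. S' \<in> H (l + 3) \<and>
    max 0 (1 - real (h * (k + h * (k choose h))) * root h (1 - \<alpha>)) * real (card S) \<le> real (card S')"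
proof -
  define c where "c = real (h * (k + h * (k choose h)))"
  define n where "n = card S"
  define b where "b = card (subsets_of_size S h - H l)"
  obtain S' where S': "S' \<subseteq> S" "S' \<in> H (l + 3)"
    and removed: "real n \<le> real (card S') + c * root h b"
    using helly_member_removing_few_points[OF assms(1-7), of l] unfolding c_def n_def b_def by blast
  have "real b \<le> (1 - \<alpha>) * real (n choose h)"
    using card_subsets_of_size_outside_le[where H = H and l = l, OF assms(6) dense]
    unfolding b_def n_def .
  also have "\<dots> \<le> (1 - \<alpha>) * real n ^ h"
    using assms(8) choose_le_pow[of n h] by (intro mult_left_mono) (simp_all flip: of_nat_power)
  finally have "root h b \<le> root h ((1 - \<alpha>) * real n ^ h)"
    using assms(4) by simp
  also have "\<dots> = root h (1 - \<alpha>) * real n"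
    using assms(4) by (simp add: real_root_mult real_root_power_cancel)
  finally have "c * root h b \<le> c * (root h (1 - \<alpha>) * real n)"
    by (rule mult_left_mono) (simp add: c_def)
  then have "(1 - c * root h (1 - \<alpha>)) * real n \<le> real (card S')"
    using removed by (simp add: algebra_simps)
  then have "max 0 (1 - c * root h (1 - \<alpha>)) * real n \<le> real (card S')"
    by (simp add: max_def)
  with S' show ?thesis
    unfolding c_def n_def by blast
qed

lemma helly_number_zero_member_of_dense:
  assumes chain: "hypergraph_chain V H" and helly: "helly_number V H 0" and "S \<subseteq> V"
    and "0 < \<alpha>" and dense: "\<alpha> * real (card S choose 0) \<le> real (card (H l \<inter> subsets_of_size S 0))"
  shows "S \<in> H (l + 3)"
proof -
  have "subsets_of_size S 0 = {{}}"
    unfolding subsets_of_size_def by auto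
  moreover have "H l \<inter> subsets_of_size S 0 \<noteq> {}"
    using dense assms(4) by auto
  ultimately have "subsets_of_size S 0 \<subseteq> H l"
    by auto
  then have "S \<in> H (l + 1)"
    by (rule helly_numberD[OF helly assms(3)])
  then show ?thesis
    using hypergraph_chain_mono[OF chain, of "l + 1" "l + 3"] by auto
qed

lemma tendsto_max_one_minus_root: "((\<lambda>\<alpha>. max 0 (1 - c * root h (1 - \<alpha>))) \<longlongrightarrow> 1) (at_left (1::real))"
proof -
  have "((\<lambda>\<alpha>. max 0 (1 - c * root h (1 - \<alpha>))) \<longlongrightarrow> max 0 (1 - c * root h (1 - 1))) (at_left (1::real))"
    by (intro tendsto_intros)
  then show ?thesis
    by simp
qed

theorem theorem5:
  fixes V :: "'a set" and H :: "int \<Rightarrow> 'a set set" and h k :: nat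
  assumes "hypergraph_chain V H"
    and "helly_number V H h"
    and "colorful_helly_number V H k"
    and "k \<ge> h"
  shows "\<exists>\<beta> :: real \<Rightarrow> real.
           (\<forall>\<alpha>\<in>{0<..<1}. \<beta> \<alpha> \<in> {0..<1}) \<and>
           (\<beta> \<longlongrightarrow> 1) (at_left 1) \<and>
           (\<forall>l S \<alpha>. finite S \<longrightarrow> S \<subseteq> V \<longrightarrow> \<alpha> \<in> {0<..<1} \<longrightarrow>
              real (card (H l \<inter> subsets_of_size S h)) \<ge> \<alpha> * real (card S choose h) \<longrightarrow>
              (\<exists>S'. S' \<subseteq> S \<and> real (card S') \<ge> \<beta> \<alpha> * real (card S) \<and> S' \<in> H (l + 3)))"
proof (cases "h = 0")
  case True
  \<comment> \<open>Since root 0 is constantly 0, the root-based choice of beta below degenerates here.\<close>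
  then have "S \<in> H (l + 3)"
    if "S \<subseteq> V" "\<alpha> \<in> {0<..<1}"
      "\<alpha> * real (card S choose h) \<le> real (card (H l \<inter> subsets_of_size S h))" for l S \<alpha>
    using helly_number_zero_member_of_dense[OF assms(1)] assms(2) that by auto
  moreover have "\<alpha> * real (card S) \<le> real (card S)" if "\<alpha> \<in> {0<..<1}" for \<alpha> and S :: "'a set"
    using that by (intro mult_left_le_one_le) auto
  ultimately show ?thesis
    by (intro exI[of _ "\<lambda>\<alpha>. \<alpha>"] conjI tendsto_ident_at) (simp, blast)
next
  case False
  define c where "c = real (h * (k + h * (k choose h)))"
  have "0 < h * (k + h * (k choose h))"
    using False assms(4) by simp
  then have "0 < c"
    unfolding c_def by (simp only: of_nat_0_less_iff)
  show ?thesis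
  proof (intro exI[of _ "\<lambda>\<alpha>. max 0 (1 - c * root h (1 - \<alpha>))"] conjI ballI allI impI)
    show "max 0 (1 - c * root h (1 - \<alpha>)) \<in> {0..<1}" if "\<alpha> \<in> {0<..<1}" for \<alpha>
      using that \<open>0 < c\<close> False by simp
    show "((\<lambda>\<alpha>. max 0 (1 - c * root h (1 - \<alpha>))) \<longlongrightarrow> 1) (at_left 1)"
      by (rule tendsto_max_one_minus_root)
    fix l S \<alpha>
    assume "finite S" "S \<subseteq> V" "\<alpha> \<in> {0<..<1}"
      and "\<alpha> * real (card S choose h) \<le> real (card (H l \<inter> subsets_of_size S h))"
    then obtain S' where "S' \<subseteq> S" "S' \<in> H (l + 3)"
      and "max 0 (1 - c * root h (1 - \<alpha>)) * real (card S) \<le> real (card S')"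
      using helly_member_of_dense[OF assms(1-3) _ assms(4), of S \<alpha> l] False unfolding c_def by auto
    then show "\<exists>S'. S' \<subseteq> S \<and> max 0 (1 - c * root h (1 - \<alpha>)) * real (card S) \<le> real (card S') \<and> S' \<in> H (l + 3)"
      by blast
  qed
qed

end
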